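(* Let $X,Y$ be orbit-finite sets and let $F$ be an equivariant set of finitely supported functions $X\to Y$. Then $F$ is orbit-finite if and only if there is $k\in\mathbb N$ such that every function in $F$ is supported by at most $k$ atoms.
   Context: Fix a countably infinite set $\mathbb A$ of atoms; atom automorphisms are bijections of $\mathbb A$. For a set with an action of atom automorphisms, $x$ is supported by $\bar a\in\mathbb A^*$ if every automorphism fixing $\bar a$ pointwise fixes $x$; it is finitely supported if some finite tuple supports it, and a set is equivariant if it is mapped to itself by all automorphisms. Automorphisms act on functions by $\pi(f)=\pi\circ f\circ\pi^{-1}$. A subset $Y$ is orbit-finite if all its elements are finitely supported and for some tuple $\bar a$ it is a union of finitely many orbits of the group of automorphisms fixing $\bar a$ pointwise. "Supported by at most $k$ atoms" means supported by some tuple of length at most $k$. *)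

theory Defs
  imports "HOL-Library.FuncSet"
begin

text \<open>Atoms are the natural numbers (a countably infinite set); atom automorphisms
are bijections nat to nat.\<close>

type_synonym atom = nat

definition atom_aut :: "(atom \<Rightarrow> atom) set" where
  "atom_aut = {\<pi>. bij \<pi>}"

definition is_action :: "((atom \<Rightarrow> atom) \<Rightarrow> 'a \<Rightarrow> 'a) \<Rightarrow> bool" where
  "is_action act \<longleftrightarrow> (\<forall>x. act id x = x) \<and>
     (\<forall>\<pi>\<in>atom_aut. \<forall>\<sigma>\<in>atom_aut. \<forall>x. act (\<pi> \<circ> \<sigma>) x = act \<pi> (act \<sigma> x))"

definition fix_aut :: "atom list \<Rightarrow> (atom \<Rightarrow> atom) set" where
  "fix_aut as = {\<pi>\<in>atom_aut. \<forall>a\<in>set as. \<pi> a = a}"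

definition supports :: "((atom \<Rightarrow> atom) \<Rightarrow> 'a \<Rightarrow> 'a) \<Rightarrow> atom list \<Rightarrow> 'a \<Rightarrow> bool" where
  "supports act as x \<longleftrightarrow> (\<forall>\<pi>\<in>fix_aut as. act \<pi> x = x)"

definition fin_supp :: "((atom \<Rightarrow> atom) \<Rightarrow> 'a \<Rightarrow> 'a) \<Rightarrow> 'a \<Rightarrow> bool" where
  "fin_supp act x \<longleftrightarrow> (\<exists>as. supports act as x)"

definition supp_by_at_most :: "((atom \<Rightarrow> atom) \<Rightarrow> 'a \<Rightarrow> 'a) \<Rightarrow> nat \<Rightarrow> 'a \<Rightarrow> bool" where
  "supp_by_at_most act k x \<longleftrightarrow> (\<exists>as. length as \<le> k \<and> supports act as x)"

definition equivariant :: "((atom \<Rightarrow> atom) \<Rightarrow> 'a \<Rightarrow> 'a) \<Rightarrow> 'a set \<Rightarrow> bool" where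
  "equivariant act S \<longleftrightarrow> (\<forall>\<pi>\<in>atom_aut. act \<pi> ` S = S)"

definition orbit_under :: "(atom \<Rightarrow> atom) set \<Rightarrow> ((atom \<Rightarrow> atom) \<Rightarrow> 'a \<Rightarrow> 'a) \<Rightarrow> 'a \<Rightarrow> 'a set" where
  "orbit_under G act x = (\<lambda>\<pi>. act \<pi> x) ` G"

definition orbit_finite :: "((atom \<Rightarrow> atom) \<Rightarrow> 'a \<Rightarrow> 'a) \<Rightarrow> 'a set \<Rightarrow> bool" where
  "orbit_finite act Y \<longleftrightarrow> (\<forall>y\<in>Y. fin_supp act y) \<and>
     (\<exists>as. \<exists>R. finite R \<and> Y = (\<Union>r\<in>R. orbit_under (fix_aut as) act r))"

text \<open>Functions X -> Y are represented as extensional HOL functions (value undefined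
outside X); the action is pi(f) = pi o f o pi^-1 on X.\<close>
definition fun_act :: "((atom \<Rightarrow> atom) \<Rightarrow> 'x \<Rightarrow> 'x) \<Rightarrow> ((atom \<Rightarrow> atom) \<Rightarrow> 'y \<Rightarrow> 'y) \<Rightarrow> 'x set
     \<Rightarrow> (atom \<Rightarrow> atom) \<Rightarrow> ('x \<Rightarrow> 'y) \<Rightarrow> ('x \<Rightarrow> 'y)" where
  "fun_act actX actY X \<pi> f = (\<lambda>x. if x \<in> X then actY \<pi> (f (actX (inv \<pi>) x)) else undefined)"

end

theory Submission
  imports Defs "HOL-Combinatorics.Transposition"
begin

text \<open>If \<open>F\<close> is a finite union of orbits, a support of each orbit representative, moved along
  by the acting automorphism, supports every element of its orbit, which bounds the support size.
  Conversely, if every function in \<open>F\<close> is supported by at most \<open>k\<close> atoms, renaming these atoms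
  into \<open>0, \<dots>, k - 1\<close> shows that \<open>F\<close> is the union of the orbits of its functions supported
  by \<open>0, \<dots>, k - 1\<close>, and there are only finitely many of those: an orbit-finite equivariant
  set is a finite union of orbits of the stabiliser of any tuple \<open>cs\<close>, so a function supported
  by \<open>cs\<close> is determined by its values on finitely many representatives, and each such value is
  one of the finitely many elements of \<open>Y\<close> supported by \<open>cs\<close> and a support of the
  representative.\<close>

lemma atom_aut_inv: "\<pi> \<in> atom_aut \<Longrightarrow> inv \<pi> \<in> atom_aut"
  by (simp add: atom_aut_def bij_imp_bij_inv)

lemma atom_aut_comp: "\<pi> \<in> atom_aut \<Longrightarrow> \<sigma> \<in> atom_aut \<Longrightarrow> \<pi> \<circ> \<sigma> \<in> atom_aut"
  by (simp add: atom_aut_def bij_comp)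

lemma fix_aut_subset: "fix_aut as \<subseteq> atom_aut"
  by (auto simp: fix_aut_def)

lemma fix_aut_Nil [simp]: "fix_aut [] = atom_aut"
  by (auto simp: fix_aut_def)

lemma id_in_fix_aut: "id \<in> fix_aut as"
  by (simp add: fix_aut_def atom_aut_def)

lemma fix_aut_inv: "\<pi> \<in> fix_aut as \<Longrightarrow> inv \<pi> \<in> fix_aut as"
  by (auto simp: fix_aut_def atom_aut_def bij_imp_bij_inv intro!: inv_f_eq bij_is_inj)

text \<open>The action on functions satisfies the composition law but fixes under \<open>id\<close>
  only the extensional functions, hence the weaker notion.\<close>

definition comp_law :: "((atom \<Rightarrow> atom) \<Rightarrow> 'a \<Rightarrow> 'a) \<Rightarrow> bool" where
  "comp_law act \<longleftrightarrow> (\<forall>\<pi>\<in>atom_aut. \<forall>\<sigma>\<in>atom_aut. \<forall>x. act (\<pi> \<circ> \<sigma>) x = act \<pi> (act \<sigma> x))"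

lemma is_action_imp_comp_law: "is_action act \<Longrightarrow> comp_law act"
  by (simp add: is_action_def comp_law_def)

lemma comp_lawD: "comp_law act \<Longrightarrow> \<pi> \<in> atom_aut \<Longrightarrow> \<sigma> \<in> atom_aut \<Longrightarrow> act (\<pi> \<circ> \<sigma>) x = act \<pi> (act \<sigma> x)"
  by (simp add: comp_law_def)

lemma act_inv_act:
  assumes "comp_law act" "\<pi> \<in> atom_aut" "act id x = x"
  shows "act (inv \<pi>) (act \<pi> x) = x"
proof -
  have "act (inv \<pi>) (act \<pi> x) = act (inv \<pi> \<circ> \<pi>) x"
    using assms(1,2) by (simp add: comp_lawD atom_aut_inv)
  also have "inv \<pi> \<circ> \<pi> = id"
    using assms(2) by (simp add: atom_aut_def bij_is_inj)
  also note assms(3)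
  finally show ?thesis .
qed

lemma orbit_under_mono: "G \<subseteq> H \<Longrightarrow> orbit_under G act x \<subseteq> orbit_under H act x"
  by (auto simp: orbit_under_def)

lemma self_in_orbit_under: "is_action act \<Longrightarrow> x \<in> orbit_under (fix_aut as) act x"
  unfolding orbit_under_def is_action_def using id_in_fix_aut by (metis image_eqI)

lemma orbit_under_subset_equivariant:
  "equivariant act Y \<Longrightarrow> G \<subseteq> atom_aut \<Longrightarrow> y \<in> Y \<Longrightarrow> orbit_under G act y \<subseteq> Y"
  unfolding equivariant_def orbit_under_def by blast

lemma supports_mono: "set as \<subseteq> set bs \<Longrightarrow> supports act as x \<Longrightarrow> supports act bs x"
  by (auto simp: supports_def fix_aut_def)

lemma supports_agree:
  assumes "comp_law act" "supports act bs r" "\<pi> \<in> atom_aut" "\<pi>' \<in> atom_aut"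
    and "\<forall>b\<in>set bs. \<pi> b = \<pi>' b"
  shows "act \<pi> r = act \<pi>' r"
proof -
  have bij: "bij \<pi>'" using assms(4) by (simp add: atom_aut_def)
  have fixed: "inv \<pi>' \<circ> \<pi> \<in> fix_aut bs"
    using assms(3-5) bij by (auto simp: fix_aut_def atom_aut_inv atom_aut_comp bij_is_inj)
  have "\<pi>' \<circ> (inv \<pi>' \<circ> \<pi>) = \<pi>"
    using bij by (simp add: fun_eq_iff bij_is_surj surj_f_inv_f)
  then have "act \<pi> r = act (\<pi>' \<circ> (inv \<pi>' \<circ> \<pi>)) r" by simp
  also have "\<dots> = act \<pi>' (act (inv \<pi>' \<circ> \<pi>) r)"
    using assms(1,4) fixed fix_aut_subset by (blast intro: comp_lawD)
  also have "act (inv \<pi>' \<circ> \<pi>) r = r"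
    using assms(2) fixed by (simp add: supports_def)
  finally show ?thesis .
qed

lemma supports_act:
  assumes "comp_law act" "supports act bs r" "\<pi> \<in> atom_aut"
  shows "supports act (map \<pi> bs) (act \<pi> r)"
  unfolding supports_def
proof
  fix \<sigma> assume \<sigma>: "\<sigma> \<in> fix_aut (map \<pi> bs)"
  then have \<sigma>_aut: "\<sigma> \<in> atom_aut" using fix_aut_subset by blast
  have "act \<sigma> (act \<pi> r) = act (\<sigma> \<circ> \<pi>) r"
    using comp_lawD[OF assms(1) \<sigma>_aut assms(3)] by simp
  also have "\<dots> = act \<pi> r"
    using \<sigma> by (intro supports_agree[OF assms(1,2) atom_aut_comp[OF \<sigma>_aut assms(3)] assms(3)])
      (auto simp: fix_aut_def)
  finally show "act \<sigma> (act \<pi> r) = act \<pi> r" .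
qed

lemma extend_to_fix_aut:
  assumes "finite A" "inj_on h A" "\<forall>a\<in>A. a \<in> set ds \<or> h a \<in> set ds \<longrightarrow> h a = a"
  shows "\<exists>\<sigma>\<in>fix_aut ds. \<forall>a\<in>A. \<sigma> a = h a"
  using assms
proof (induction A rule: finite_induct)
  case empty
  show ?case using id_in_fix_aut by blast
next
  case (insert x A)
  then obtain \<sigma> where \<sigma>: "\<sigma> \<in> fix_aut ds" "\<forall>a\<in>A. \<sigma> a = h a" by auto
  then have bij: "bij \<sigma>" and fixed: "\<forall>d\<in>set ds. \<sigma> d = d"
    by (auto simp: fix_aut_def atom_aut_def)
  show ?case
  proof (cases "x \<in> set ds \<or> h x \<in> set ds")
    case True
    then have "\<sigma> x = h x" using insert.prems(2) fixed by auto
    then show ?thesis using \<sigma> by auto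
  next
    case False
    define \<tau> where "\<tau> = transpose (\<sigma> x) (h x) \<circ> \<sigma>"
    have "h a \<noteq> \<sigma> x" if "a \<in> A" for a
      using that insert.hyps(2) bij \<sigma>(2) by (metis bij_is_inj injD)
    moreover have "h a \<noteq> h x" if "a \<in> A" for a
      using that insert.hyps(2) insert.prems(1) by (metis inj_on_contraD insertI1 insertI2)
    ultimately have "\<forall>a\<in>insert x A. \<tau> a = h a"
      using \<sigma>(2) by (auto simp: \<tau>_def transpose_apply_other)
    moreover have "\<tau> d = d" if "d \<in> set ds" for d
    proof -
      have "d \<noteq> \<sigma> x"
        using that False fixed bij by (metis bij_is_inj injD)
      moreover have "d \<noteq> h x" using that False by blast
      ultimately show ?thesis using that fixed by (simp add: \<tau>_def)
    qed
    then have "\<tau> \<in> fix_aut ds"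
      using bij by (simp add: \<tau>_def fix_aut_def atom_aut_def bij_comp)
    ultimately show ?thesis by blast
  qed
qed

lemma same_fix_orbit:
  assumes "comp_law act" "supports act bs r" "\<pi> \<in> atom_aut" "\<pi>' \<in> atom_aut"
    and "\<forall>b\<in>set bs. \<pi> b \<in> set ds \<or> \<pi>' b \<in> set ds \<longrightarrow> \<pi> b = \<pi>' b"
  shows "act \<pi> r \<in> orbit_under (fix_aut ds) act (act \<pi>' r)"
proof -
  have bij: "bij \<pi>" "bij \<pi>'" using assms(3,4) by (auto simp: atom_aut_def)
  have inv_cancel: "inv \<pi>' (\<pi>' b) = b" for b
    using bij(2) by (simp add: bij_is_inj)
  have "inj (\<pi> \<circ> inv \<pi>')"
    using bij by (simp add: bij_is_inj bij_comp bij_imp_bij_inv)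
  then have inj: "inj_on (\<pi> \<circ> inv \<pi>') (\<pi>' ` set bs)"
    using inj_on_subset by blast
  have identity_on_ds: "\<forall>a\<in>\<pi>' ` set bs. a \<in> set ds \<or> (\<pi> \<circ> inv \<pi>') a \<in> set ds \<longrightarrow> (\<pi> \<circ> inv \<pi>') a = a"
  proof
    fix a assume "a \<in> \<pi>' ` set bs"
    then obtain b where b: "b \<in> set bs" "a = \<pi>' b" by blast
    then have "(\<pi> \<circ> inv \<pi>') a = \<pi> b" by (simp add: inv_cancel)
    with b assms(5) show "a \<in> set ds \<or> (\<pi> \<circ> inv \<pi>') a \<in> set ds \<longrightarrow> (\<pi> \<circ> inv \<pi>') a = a"
      by metis
  qed
  obtain \<sigma> where \<sigma>: "\<sigma> \<in> fix_aut ds" "\<forall>a\<in>\<pi>' ` set bs. \<sigma> a = (\<pi> \<circ> inv \<pi>') a"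
    using extend_to_fix_aut[OF finite_imageI[OF finite_set] inj identity_on_ds] by blast
  then have \<sigma>_on_bs: "\<forall>b\<in>set bs. \<sigma> (\<pi>' b) = \<pi> b" by (simp add: inv_cancel)
  have \<sigma>_aut: "\<sigma> \<in> atom_aut" using \<sigma>(1) fix_aut_subset by blast
  have "act \<pi> r = act (\<sigma> \<circ> \<pi>') r"
    using \<sigma>_on_bs by (intro supports_agree[OF assms(1-3) atom_aut_comp[OF \<sigma>_aut assms(4)]]) auto
  also have "\<dots> = act \<sigma> (act \<pi>' r)"
    using comp_lawD[OF assms(1) \<sigma>_aut assms(4)] .
  finally show ?thesis using \<sigma>(1) unfolding orbit_under_def by blast
qed

text \<open>An automorphism is recorded on the support only by where it hits \<open>ds\<close>; there are
  finitely many such patterns and equal patterns give the same \<open>ds\<close>-orbit.\<close>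

lemma orbit_covered_by_fix_orbits:
  assumes "comp_law act" "supports act bs r"
  obtains Z where "finite Z" "Z \<subseteq> orbit_under atom_aut act r"
    "orbit_under atom_aut act r \<subseteq> (\<Union>z\<in>Z. orbit_under (fix_aut ds) act z)"
proof -
  define pat where "pat \<pi> = (\<lambda>b\<in>set bs. if \<pi> b \<in> set ds then Some (\<pi> b) else None)"
    for \<pi> :: "atom \<Rightarrow> atom"
  define rep where "rep = inv_into atom_aut pat"
  define Z where "Z = (\<lambda>p. act (rep p) r) ` pat ` atom_aut"
  have "pat ` atom_aut \<subseteq> set bs \<rightarrow>\<^sub>E insert None (Some ` set ds)"
    by (auto simp: pat_def)
  then have "finite (pat ` atom_aut)"
    by (rule finite_subset) (simp add: finite_PiE)
  then have "finite Z" by (simp add: Z_def)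
  have rep: "rep (pat \<pi>) \<in> atom_aut" "pat (rep (pat \<pi>)) = pat \<pi>" if "\<pi> \<in> atom_aut" for \<pi>
    using that by (simp_all add: rep_def inv_into_into f_inv_into_f)
  then have "Z \<subseteq> orbit_under atom_aut act r"
    by (auto simp: Z_def orbit_under_def)
  moreover have "orbit_under atom_aut act r \<subseteq> (\<Union>z\<in>Z. orbit_under (fix_aut ds) act z)"
  proof
    fix y assume "y \<in> orbit_under atom_aut act r"
    then obtain \<pi> where \<pi>: "\<pi> \<in> atom_aut" "y = act \<pi> r" by (auto simp: orbit_under_def)
    define \<pi>' where "\<pi>' = rep (pat \<pi>)"
    have \<pi>': "\<pi>' \<in> atom_aut" "pat \<pi>' = pat \<pi>" using rep[OF \<pi>(1)] by (simp_all add: \<pi>'_def)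
    have "\<pi> b \<in> set ds \<or> \<pi>' b \<in> set ds \<longrightarrow> \<pi> b = \<pi>' b" if "b \<in> set bs" for b
    proof -
      have "pat \<pi>' b = pat \<pi> b" using \<pi>'(2) by simp
      then have "(if \<pi>' b \<in> set ds then Some (\<pi>' b) else None)
          = (if \<pi> b \<in> set ds then Some (\<pi> b) else None)"
        using that by (simp add: pat_def)
      then show ?thesis by (auto split: if_splits)
    qed
    then have "y \<in> orbit_under (fix_aut ds) act (act \<pi>' r)"
      using same_fix_orbit[OF assms \<pi>(1) \<pi>'(1)] \<pi>(2) by blast
    moreover have "act \<pi>' r \<in> Z" using \<pi>(1) by (simp add: Z_def \<pi>'_def)
    ultimately show "y \<in> (\<Union>z\<in>Z. orbit_under (fix_aut ds) act z)" by blast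
  qed
  ultimately show ?thesis using that \<open>finite Z\<close> by blast
qed

lemma orbit_finite_fix_orbits:
  assumes "is_action act" "equivariant act Y" "orbit_finite act Y"
  obtains Z where "finite Z" "Z \<subseteq> Y" "Y = (\<Union>z\<in>Z. orbit_under (fix_aut ds) act z)"
proof -
  obtain as R where R: "finite R" "Y = (\<Union>r\<in>R. orbit_under (fix_aut as) act r)"
    using assms(3) by (auto simp: orbit_finite_def)
  have RY: "R \<subseteq> Y" using R(2) self_in_orbit_under[OF assms(1)] by blast
  have "\<forall>r\<in>R. \<exists>Z. finite Z \<and> Z \<subseteq> orbit_under atom_aut act r
      \<and> orbit_under atom_aut act r \<subseteq> (\<Union>z\<in>Z. orbit_under (fix_aut ds) act z)"
  proof
    fix r assume "r \<in> R"
    then have "fin_supp act r" using RY assms(3) unfolding orbit_finite_def by blast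
    then obtain bs where "supports act bs r" unfolding fin_supp_def by blast
    then obtain Z where "finite Z" "Z \<subseteq> orbit_under atom_aut act r"
      "orbit_under atom_aut act r \<subseteq> (\<Union>z\<in>Z. orbit_under (fix_aut ds) act z)"
      by (rule orbit_covered_by_fix_orbits[OF is_action_imp_comp_law[OF assms(1)]])
    then show "\<exists>Z. finite Z \<and> Z \<subseteq> orbit_under atom_aut act r
        \<and> orbit_under atom_aut act r \<subseteq> (\<Union>z\<in>Z. orbit_under (fix_aut ds) act z)"
      by blast
  qed
  from bchoice[OF this] obtain Zr where Zr: "\<forall>r\<in>R. finite (Zr r) \<and> Zr r \<subseteq> orbit_under atom_aut act r
      \<and> orbit_under atom_aut act r \<subseteq> (\<Union>z\<in>Zr r. orbit_under (fix_aut ds) act z)" ..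
  show ?thesis
  proof
    show "finite (\<Union>(Zr ` R))" using R(1) Zr by simp
    have "orbit_under atom_aut act r \<subseteq> Y" if "r \<in> R" for r
      using orbit_under_subset_equivariant[OF assms(2) order_refl] that RY by blast
    then show ZY: "\<Union>(Zr ` R) \<subseteq> Y" using Zr by blast
    have "Y \<subseteq> (\<Union>r\<in>R. orbit_under atom_aut act r)"
      unfolding R(2) by (intro UN_mono order_refl orbit_under_mono fix_aut_subset)
    also have "\<dots> \<subseteq> (\<Union>r\<in>R. \<Union>z\<in>Zr r. orbit_under (fix_aut ds) act z)"
      by (rule UN_mono[OF order_refl]) (use Zr in blast)
    also have "\<dots> = (\<Union>z\<in>\<Union>(Zr ` R). orbit_under (fix_aut ds) act z)"
      by (simp only: UN_UN_flatten)
    finally have "Y \<subseteq> (\<Union>z\<in>\<Union>(Zr ` R). orbit_under (fix_aut ds) act z)" .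
    moreover have "(\<Union>z\<in>\<Union>(Zr ` R). orbit_under (fix_aut ds) act z) \<subseteq> Y"
      by (rule UN_least) (use ZY orbit_under_subset_equivariant[OF assms(2) fix_aut_subset] in blast)
    ultimately show "Y = (\<Union>z\<in>\<Union>(Zr ` R). orbit_under (fix_aut ds) act z)" ..
  qed
qed

text \<open>Each \<open>ds\<close>-orbit contains at most one element supported by \<open>ds\<close>.\<close>

lemma finite_supported_elements:
  assumes "is_action act" "equivariant act Y" "orbit_finite act Y"
  shows "finite {y\<in>Y. supports act ds y}"
proof -
  obtain Z where Z: "finite Z" "Z \<subseteq> Y" "Y = (\<Union>z\<in>Z. orbit_under (fix_aut ds) act z)"
    by (rule orbit_finite_fix_orbits[OF assms])
  have "{y\<in>Y. supports act ds y} \<subseteq> Z"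
  proof
    fix y assume y: "y \<in> {y\<in>Y. supports act ds y}"
    then have "y \<in> (\<Union>z\<in>Z. orbit_under (fix_aut ds) act z)" using Z(3) by blast
    then obtain z \<sigma> where z: "z \<in> Z" "\<sigma> \<in> fix_aut ds" "y = act \<sigma> z"
      unfolding orbit_under_def by blast
    have "\<sigma> \<in> atom_aut" using z(2) fix_aut_subset by blast
    have "z = act (inv \<sigma>) (act \<sigma> z)"
      using act_inv_act[OF is_action_imp_comp_law[OF assms(1)] \<open>\<sigma> \<in> atom_aut\<close>] assms(1)
      by (simp add: is_action_def)
    also have "\<dots> = y"
      using y z(3) fix_aut_inv[OF z(2)] by (simp add: supports_def)
    finally show "y \<in> Z" using z(1) by simp
  qed
  then show ?thesis using Z(1) by (rule finite_subset)
qed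

lemma fun_act_comp:
  assumes "is_action actX" "is_action actY" "equivariant actX X" "\<pi> \<in> atom_aut" "\<sigma> \<in> atom_aut"
  shows "fun_act actX actY X (\<pi> \<circ> \<sigma>) f = fun_act actX actY X \<pi> (fun_act actX actY X \<sigma> f)"
proof
  fix x
  have "inv (\<pi> \<circ> \<sigma>) = inv \<sigma> \<circ> inv \<pi>"
    using assms(4,5) by (simp add: atom_aut_def o_inv_distrib)
  moreover have "x \<in> X \<Longrightarrow> actX (inv \<pi>) x \<in> X"
    using assms(3,4) atom_aut_inv unfolding equivariant_def by blast
  ultimately show "fun_act actX actY X (\<pi> \<circ> \<sigma>) f x = fun_act actX actY X \<pi> (fun_act actX actY X \<sigma> f) x"
    using assms(1,2,4,5) atom_aut_inv by (simp add: fun_act_def is_action_def)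
qed

lemma comp_law_fun_act:
  "is_action actX \<Longrightarrow> is_action actY \<Longrightarrow> equivariant actX X \<Longrightarrow> comp_law (fun_act actX actY X)"
  unfolding comp_law_def by (blast intro: fun_act_comp)

lemma fun_act_id:
  "is_action actX \<Longrightarrow> is_action actY \<Longrightarrow> f \<in> extensional X \<Longrightarrow> fun_act actX actY X id f = f"
  by (auto simp: fun_act_def is_action_def extensional_def)

lemma supports_apply:
  assumes "is_action actX" "equivariant actX X" "x \<in> X"
    and "supports (fun_act actX actY X) cs g" "supports actX bs x"
  shows "supports actY (cs @ bs) (g x)"
  unfolding supports_def
proof
  fix \<sigma> assume \<sigma>: "\<sigma> \<in> fix_aut (cs @ bs)"
  then have "\<sigma> \<in> fix_aut cs" "\<sigma> \<in> fix_aut bs" "\<sigma> \<in> atom_aut"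
    by (auto simp: fix_aut_def)
  then have "fun_act actX actY X \<sigma> g = g" "actX \<sigma> x = x" "actX (inv \<sigma>) x = x"
    using assms(4,5) fix_aut_inv by (auto simp: supports_def)
  then have "g x = fun_act actX actY X \<sigma> g x" by simp
  also have "\<dots> = actY \<sigma> (g x)"
    using assms(3) \<open>actX (inv \<sigma>) x = x\<close> by (simp add: fun_act_def)
  finally show "actY \<sigma> (g x) = g x" ..
qed

lemma fun_act_fixed_apply:
  assumes "is_action actX" "equivariant actX X" "x \<in> X" "\<sigma> \<in> atom_aut"
    and "fun_act actX actY X \<sigma> g = g"
  shows "g (actX \<sigma> x) = actY \<sigma> (g x)"
proof -
  have "actX \<sigma> x \<in> X" using assms(2-4) by (auto simp: equivariant_def)
  have "g (actX \<sigma> x) = fun_act actX actY X \<sigma> g (actX \<sigma> x)"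
    using assms(5) by simp
  also have "\<dots> = actY \<sigma> (g (actX (inv \<sigma>) (actX \<sigma> x)))"
    using \<open>actX \<sigma> x \<in> X\<close> by (simp add: fun_act_def)
  also have "actX (inv \<sigma>) (actX \<sigma> x) = x"
    using act_inv_act[OF is_action_imp_comp_law[OF assms(1)] assms(4)] assms(1)
    by (simp add: is_action_def)
  finally show ?thesis .
qed

lemma finite_supported_functions:
  assumes "is_action actX" "is_action actY" "equivariant actX X" "equivariant actY Y"
    and "orbit_finite actX X" "orbit_finite actY Y"
  shows "finite {g \<in> X \<rightarrow>\<^sub>E Y. supports (fun_act actX actY X) cs g}"
proof -
  let ?G = "{g \<in> X \<rightarrow>\<^sub>E Y. supports (fun_act actX actY X) cs g}"
  obtain J where J: "finite J" "J \<subseteq> X" "X = (\<Union>j\<in>J. orbit_under (fix_aut cs) actX j)"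
    using orbit_finite_fix_orbits[OF assms(1,3,5)] by blast
  have "\<forall>j\<in>J. \<exists>bs. supports actX bs j"
    using J(2) assms(5) unfolding orbit_finite_def fin_supp_def by blast
  from bchoice[OF this] obtain bs where bs: "\<forall>j\<in>J. supports actX (bs j) j" ..
  define S where "S = (\<Union>j\<in>J. {y\<in>Y. supports actY (cs @ bs j) y})"
  have "finite S"
    unfolding S_def using J(1) finite_supported_elements[OF assms(2,4,6)] by blast
  have values_in_S: "restrict g J \<in> J \<rightarrow>\<^sub>E S" if g: "g \<in> ?G" for g
  proof (rule restrict_PiE_iff[THEN iffD2], rule ballI)
    fix j assume "j \<in> J"
    then have "j \<in> X" "supports actX (bs j) j" using J(2) bs by auto
    then have "supports actY (cs @ bs j) (g j)" "g j \<in> Y"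
      using g supports_apply[OF assms(1,3)] by (auto simp: PiE_iff)
    then show "g j \<in> S" using \<open>j \<in> J\<close> by (auto simp: S_def)
  qed
  have inj: "inj_on (\<lambda>g. restrict g J) ?G"
  proof (rule inj_onI, rule ext)
    fix g1 g2 x assume g: "g1 \<in> ?G" "g2 \<in> ?G" and eq: "restrict g1 J = restrict g2 J"
    show "g1 x = g2 x"
    proof (cases "x \<in> X")
      case True
      then obtain j \<sigma> where j: "j \<in> J" "\<sigma> \<in> fix_aut cs" "x = actX \<sigma> j"
        using J(3) by (auto simp: orbit_under_def)
      have "\<sigma> \<in> atom_aut" "j \<in> X" using j(1,2) J(2) fix_aut_subset by blast+
      moreover have "fun_act actX actY X \<sigma> g1 = g1" "fun_act actX actY X \<sigma> g2 = g2"
        using g j(2) by (auto simp: supports_def)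
      ultimately have "g1 x = actY \<sigma> (g1 j)" "g2 x = actY \<sigma> (g2 j)"
        using fun_act_fixed_apply[OF assms(1,3)] j(3) by blast+
      moreover have "g1 j = g2 j" using eq j(1) by (metis restrict_apply')
      ultimately show ?thesis by simp
    qed (use g in \<open>auto simp: PiE_def extensional_def\<close>)
  qed
  have "(\<lambda>g. restrict g J) ` ?G \<subseteq> J \<rightarrow>\<^sub>E S" using values_in_S by blast
  moreover have "finite (J \<rightarrow>\<^sub>E S)" using J(1) \<open>finite S\<close> by (simp add: finite_PiE)
  ultimately have "finite ((\<lambda>g. restrict g J) ` ?G)" by (rule finite_subset)
  then show ?thesis using inj by (rule finite_imageD)
qed

lemma bounded_support_if_orbit_finite:
  assumes "comp_law act" "orbit_finite act F"
  shows "\<exists>k. \<forall>f\<in>F. supp_by_at_most act k f"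
proof -
  obtain as R where R: "finite R" "F = (\<Union>r\<in>R. orbit_under (fix_aut as) act r)"
    using assms(2) by (auto simp: orbit_finite_def)
  have "act id r \<in> F" if "r \<in> R" for r
    using that R(2) id_in_fix_aut by (auto simp: orbit_under_def)
  then have "\<forall>r\<in>R. \<exists>bs. supports act bs (act id r)"
    using assms(2) unfolding orbit_finite_def fin_supp_def by blast
  from bchoice[OF this] obtain bs where bs: "\<forall>r\<in>R. supports act (bs r) (act id r)" ..
  have "supp_by_at_most act (\<Sum>r\<in>R. length (bs r)) f" if "f \<in> F" for f
  proof -
    obtain r \<pi> where r: "r \<in> R" "\<pi> \<in> atom_aut" "f = act \<pi> r"
      using \<open>f \<in> F\<close> R(2) fix_aut_subset by (auto simp: orbit_under_def)
    have "f = act \<pi> (act id r)"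
      using comp_lawD[OF assms(1) r(2), of id] r(3) by (simp add: atom_aut_def)
    then have "supports act (map \<pi> (bs r)) f"
      using supports_act[OF assms(1) bspec[OF bs r(1)] r(2)] by simp
    moreover have "length (bs r) \<le> (\<Sum>r\<in>R. length (bs r))"
      by (rule member_le_sum[OF r(1) _ R(1)]) simp
    ultimately show ?thesis
      unfolding supp_by_at_most_def by (metis length_map)
  qed
  then show ?thesis by blast
qed

lemma exists_supported_by_initial_atoms:
  assumes "comp_law act" "\<forall>f\<in>F. act id f = f" "equivariant act F"
    and "f \<in> F" "supp_by_at_most act k f"
  shows "\<exists>g\<in>F. supports act [0..<k] g \<and> f \<in> orbit_under atom_aut act g"
proof -
  obtain as where as: "length as \<le> k" "supports act as f"
    using assms(5) by (auto simp: supp_by_at_most_def)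
  obtain h where h: "bij_betw h (set as) {0..<card (set as)}"
    using ex_bij_betw_finite_nat by blast
  then obtain \<rho> where \<rho>: "\<rho> \<in> atom_aut" "\<forall>a\<in>set as. \<rho> a = h a"
    using extend_to_fix_aut[of "set as" h "[]"] by (auto simp: bij_betw_def)
  define g where "g = act \<rho> f"
  have "g \<in> F" using assms(3,4) \<rho>(1) by (auto simp: equivariant_def g_def)
  moreover have "set (map \<rho> as) \<subseteq> set [0..<k]"
    using h \<rho>(2) card_length[of as] as(1) by (auto simp: bij_betw_def)
  then have "supports act [0..<k] g"
    using supports_act[OF assms(1) as(2) \<rho>(1)] unfolding g_def by (rule supports_mono)
  moreover have "f = act (inv \<rho>) g"
    using act_inv_act[OF assms(1) \<rho>(1)] assms(2,4) by (simp add: g_def)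
  then have "f \<in> orbit_under atom_aut act g"
    using atom_aut_inv[OF \<rho>(1)] by (auto simp: orbit_under_def)
  ultimately show ?thesis by blast
qed

lemma orbit_finite_if_bounded_support:
  assumes "comp_law act" "\<forall>f\<in>F. act id f = f" "equivariant act F"
    and "\<forall>f\<in>F. fin_supp act f" "\<forall>f\<in>F. supp_by_at_most act k f"
    and "finite {g\<in>F. supports act [0..<k] g}"
  shows "orbit_finite act F"
proof -
  let ?FC = "{g\<in>F. supports act [0..<k] g}"
  have "F \<subseteq> (\<Union>g\<in>?FC. orbit_under atom_aut act g)"
    using exists_supported_by_initial_atoms[OF assms(1-3)] assms(5) by blast
  moreover have "(\<Union>g\<in>?FC. orbit_under atom_aut act g) \<subseteq> F"
    using orbit_under_subset_equivariant[OF assms(3) order_refl] by blast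
  ultimately have "F = (\<Union>g\<in>?FC. orbit_under (fix_aut []) act g)"
    by simp
  then show ?thesis using assms(4,6) unfolding orbit_finite_def by blast
qed

theorem mainTheorem3:
  fixes actX :: "(atom \<Rightarrow> atom) \<Rightarrow> 'x \<Rightarrow> 'x"
    and actY :: "(atom \<Rightarrow> atom) \<Rightarrow> 'y \<Rightarrow> 'y"
    and X :: "'x set" and Y :: "'y set"
    and F :: "('x \<Rightarrow> 'y) set"
  assumes "is_action actX" and "is_action actY"
    and "equivariant actX X" and "equivariant actY Y"
    and "orbit_finite actX X" and "orbit_finite actY Y"
    and "F \<subseteq> X \<rightarrow>\<^sub>E Y"
    and "\<forall>f\<in>F. fin_supp (fun_act actX actY X) f"
    and "equivariant (fun_act actX actY X) F"
  shows "orbit_finite (fun_act actX actY X) F \<longleftrightarrow>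
         (\<exists>k::nat. \<forall>f\<in>F. supp_by_at_most (fun_act actX actY X) k f)"
proof -
  have comp_law: "comp_law (fun_act actX actY X)"
    using comp_law_fun_act[OF assms(1-3)] .
  show ?thesis
  proof
    assume "orbit_finite (fun_act actX actY X) F"
    then show "\<exists>k. \<forall>f\<in>F. supp_by_at_most (fun_act actX actY X) k f"
      using bounded_support_if_orbit_finite[OF comp_law] by blast
  next
    assume "\<exists>k. \<forall>f\<in>F. supp_by_at_most (fun_act actX actY X) k f"
    then obtain k where k: "\<forall>f\<in>F. supp_by_at_most (fun_act actX actY X) k f" ..
    have "\<forall>f\<in>F. fun_act actX actY X id f = f"
      using assms(7) fun_act_id[OF assms(1,2)] by (auto simp: PiE_def)
    moreover have "finite {g\<in>F. supports (fun_act actX actY X) [0..<k] g}"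
      by (rule finite_subset[OF _ finite_supported_functions[OF assms(1-6)]]) (use assms(7) in blast)
    ultimately show "orbit_finite (fun_act actX actY X) F"
      using orbit_finite_if_bounded_support[OF comp_law _ assms(9,8) k] by blast
  qed
qed

end
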